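(* Let $n \ge 2$ be an integer, $\alpha,\beta\in\mathbb{R}$ with $\beta>0$ and $\alpha^2 < n\beta$, and let $\mathbb{M}_{\alpha,\beta} := \{M \in \mathbb{R}^{n\times n} : s(M) = n\alpha,\ q(M) = n\beta\}$. Let $M \in \mathbb{M}_{\alpha,\beta}$ be a matrix whose determinant is maximal among all elements of $\mathbb{M}_{\alpha,\beta}$ (such a matrix exists by compactness). Then: If $\alpha^2 \le \beta$: (A) $MM^T = \beta I$, and (B) $\det M = \beta^{n/2}$. If $\alpha^2 \ge \beta$: (C) every row sum and every column sum of $M$ equals $\alpha$; (D) $MM^T = (\beta-\delta)I + \delta J$, where $\delta := \frac{\alpha^2-\beta}{n-1}$ (so $\beta - \delta = \frac{n\beta-\alpha^2}{n-1}$); and (E) $\det M = |\alpha|(\beta-\delta)^{\frac{n-1}{2}}$.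
   Context: For a real matrix $M$, $s(M)$ denotes the sum of all entries of $M$ and $q(M)$ the sum of the squares of all entries of $M$. $I$ is the $n\times n$ identity matrix and $J$ is the $n\times n$ matrix with all entries equal to $1$. *)

theory Defs
  imports "HOL-Analysis.Analysis"
begin

definition msum :: "real^'n^'n \<Rightarrow> real" where
  "msum M = (\<Sum>i\<in>UNIV. \<Sum>j\<in>UNIV. M $ i $ j)"

definition msq :: "real^'n^'n \<Rightarrow> real" where
  "msq M = (\<Sum>i\<in>UNIV. \<Sum>j\<in>UNIV. (M $ i $ j)^2)"

definition onesJ :: "real^'n^'n" where
  "onesJ = (\<chi> i j. 1)"

definition Mset :: "real \<Rightarrow> real \<Rightarrow> (real^'n^'n) set" where
  "Mset \<alpha> \<beta> = {M. msum M = real CARD('n) * \<alpha> \<and> msq M = real CARD('n) * \<beta>}"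

end

theory Submission
  imports Defs
begin

(* At a maximizer M, the Lagrange condition on the sphere Mset says that the gradient of det,
   the cofactor matrix, lies in the span of J and M: cof M = a J + b M. Since cof M M^T = M^T cof M
   = det M I, this gives a J M^T + b M M^T = det M I and the same identity for M^T.
   If a = 0, then M M^T = M^T M = \<beta> I; the column sums c_j then satisfy
   \<Sum> (c_j - \<alpha>)^2 = n (\<beta> - \<alpha>^2), so \<alpha>^2 \<le> \<beta>, with all line sums equal to \<alpha> if \<alpha>^2 = \<beta>.
   If a \<noteq> 0, the identity forces all row sums (and all column sums) to coincide, hence to equal \<alpha>,
   and then M M^T = (\<beta> - \<delta>) I + \<delta> J, the coefficients being fixed by the trace and the entry sum.
   For \<alpha>^2 < \<beta> this second case is impossible: by strict AM-GM its determinant is below \<beta>^n,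
   while a rotation scaled by sqrt \<beta> lies in Mset and has determinant \<beta>^(n/2). *)

section \<open>Cofactors and the derivative of the determinant\<close>

definition row_replace :: "'a^'n^'m \<Rightarrow> 'm \<Rightarrow> 'a^'n \<Rightarrow> 'a^'n^'m" where
  "row_replace A i x = (\<chi> k. if k = i then x else A $ k)"

(* Entry (i, j) is the (i, j) cofactor of A; the adjugate is the transpose. *)
definition cofactor_matrix :: "'a::comm_ring_1^'n^'n \<Rightarrow> 'a^'n^'n" where
  "cofactor_matrix A = (\<chi> i j. det (row_replace A i (axis j 1)))"

lemma det_row_replace_expansion:
  fixes A :: "'a::comm_ring_1^'n^'n"
  shows "det (row_replace A i x) = (\<Sum>j\<in>UNIV. x $ j * cofactor_matrix A $ i $ j)"
proof -
  have "det (row_replace A i x) = det (row_replace A i (\<Sum>j\<in>UNIV. x $ j *s axis j 1))"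
    by (simp add: basis_expansion)
  also have "\<dots> = (\<Sum>j\<in>UNIV. det (row_replace A i (x $ j *s axis j 1)))"
    unfolding row_replace_def by (rule det_linear_row_sum) simp
  also have "\<dots> = (\<Sum>j\<in>UNIV. x $ j * cofactor_matrix A $ i $ j)"
    unfolding row_replace_def cofactor_matrix_def by (simp add: det_row_mul)
  finally show ?thesis .
qed

lemma det_row_replace_row:
  fixes A :: "'a::comm_ring_1^'n^'n"
  shows "det (row_replace A i (A $ k)) = (if k = i then det A else 0)"
proof (cases "k = i")
  case True
  have "row_replace A i (A $ i) = A"
    by (simp add: row_replace_def vec_eq_iff)
  with True show ?thesis by simp
next
  case False
  then show ?thesis
    by (auto intro!: det_identical_rows[of i k] simp: row_replace_def row_def vec_eq_iff)
qed

lemma cofactor_matrix_mult_transpose: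
  fixes A :: "'a::comm_ring_1^'n^'n"
  shows "cofactor_matrix A ** transpose A = mat (det A)"
proof -
  have "(cofactor_matrix A ** transpose A) $ i $ k = det (row_replace A i (A $ k))" for i k
    by (simp add: det_row_replace_expansion matrix_matrix_mult_def transpose_def mult.commute)
  then show ?thesis by (simp add: vec_eq_iff det_row_replace_row mat_def)
qed

lemma has_real_derivative_det:
  fixes \<gamma> :: "real \<Rightarrow> real^'n^'n"
  assumes "\<And>i j. ((\<lambda>t. \<gamma> t $ i $ j) has_real_derivative X $ i $ j) (at t0)"
  shows "((\<lambda>t. det (\<gamma> t)) has_real_derivative inner (cofactor_matrix (\<gamma> t0)) X) (at t0)"
proof -
  have prod_row_replace: "(\<Prod>k\<in>UNIV. row_replace A i x $ k $ p k) = x $ p i * (\<Prod>k\<in>UNIV-{i}. A $ k $ p k)"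
    for A :: "real^'n^'n" and i x and p :: "'n \<Rightarrow> 'n"
  proof -
    have "(\<Prod>k\<in>UNIV-{i}. row_replace A i x $ k $ p k) = (\<Prod>k\<in>UNIV-{i}. A $ k $ p k)"
      by (rule prod.cong) (auto simp: row_replace_def)
    then show ?thesis by (simp add: prod.remove[of UNIV i] row_replace_def)
  qed
  have "((\<lambda>t. det (\<gamma> t)) has_real_derivative (\<Sum>p\<in>{p. p permutes UNIV}. of_int (sign p) *
      (\<Sum>i\<in>UNIV. X $ i $ p i * (\<Prod>k\<in>UNIV-{i}. \<gamma> t0 $ k $ p k)))) (at t0)"
    unfolding det_def by (intro DERIV_sum DERIV_cmult has_field_derivative_prod assms)
  also have "(\<Sum>p\<in>{p. p permutes UNIV}. of_int (sign p) *
      (\<Sum>i\<in>UNIV. X $ i $ p i * (\<Prod>k\<in>UNIV-{i}. \<gamma> t0 $ k $ p k)))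
      = (\<Sum>i\<in>UNIV. det (row_replace (\<gamma> t0) i (X $ i)))"
    unfolding det_def prod_row_replace sum_distrib_left by (subst sum.swap) simp
  also have "\<dots> = inner (cofactor_matrix (\<gamma> t0)) X"
    by (simp add: det_row_replace_expansion inner_vec_def mult.commute)
  finally show ?thesis .
qed

section \<open>The first-order condition at a maximizer\<close>

lemma inner_onesJ: "inner M onesJ = msum M"
  by (simp add: msum_def inner_vec_def onesJ_def)

lemma inner_self_eq_msq: "inner M M = msq M"
  by (simp add: msq_def inner_vec_def power2_eq_square)

lemma inner_onesJ_onesJ: "inner (onesJ :: real^'n^'n) onesJ = real CARD('n) ^ 2"
  by (simp add: inner_vec_def onesJ_def power2_eq_square)

lemma Mset_iff_inner:
  "M \<in> Mset \<alpha> \<beta> \<longleftrightarrow> inner M onesJ = real CARD('n) * \<alpha> \<and> inner M M = real CARD('n) * \<beta>"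
  for M :: "real^'n^'n"
  by (simp add: Mset_def inner_onesJ inner_self_eq_msq)

lemma Mset_centered:
  fixes M :: "real^'n^'n"
  assumes "M \<in> Mset \<alpha> \<beta>"
  defines "M0 \<equiv> M - (\<alpha> / real CARD('n)) *\<^sub>R onesJ"
  shows "inner M0 onesJ = 0" and "inner M0 M0 = real CARD('n) * \<beta> - \<alpha>^2"
  using assms by (simp_all add: Mset_iff_inner M0_def inner_diff_left inner_diff_right
      inner_onesJ_onesJ inner_commute[of onesJ M] power2_eq_square field_simps)

lemma Mset_great_circle:
  fixes M Y :: "real^'n^'n"
  assumes M: "M \<in> Mset \<alpha> \<beta>"
    and YJ: "inner Y onesJ = 0" and YM: "inner Y M = 0"
    and YY: "inner Y Y = real CARD('n) * \<beta> - \<alpha>^2"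
  defines "C \<equiv> (\<alpha> / real CARD('n)) *\<^sub>R onesJ"
  shows "C + cos t *\<^sub>R (M - C) + sin t *\<^sub>R Y \<in> Mset \<alpha> \<beta>"
proof -
  define r where "r = real CARD('n) * \<beta> - \<alpha>^2"
  define M0 where "M0 = M - C"
  have M0J: "inner M0 onesJ = 0" and M0M0: "inner M0 M0 = r"
    using Mset_centered[OF M] by (simp_all add: M0_def C_def r_def)
  have YM0: "inner Y M0 = 0" by (simp add: M0_def C_def inner_diff_right YM YJ)
  have CM0: "inner C M0 = 0" and CY: "inner C Y = 0"
    by (simp_all add: C_def inner_commute[of onesJ] M0J YJ)
  have CC: "inner C C = \<alpha>^2" by (simp add: C_def inner_onesJ_onesJ power2_eq_square)
  have "inner (C + cos t *\<^sub>R M0 + sin t *\<^sub>R Y) onesJ = real CARD('n) * \<alpha>"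
    by (simp add: inner_add_left M0J YJ C_def inner_onesJ_onesJ power2_eq_square)
  moreover have "inner (C + cos t *\<^sub>R M0 + sin t *\<^sub>R Y) (C + cos t *\<^sub>R M0 + sin t *\<^sub>R Y) = \<alpha>^2 + r"
    using YY unfolding r_def[symmetric]
    by (simp add: inner_add_left inner_add_right inner_commute[of M0 C] inner_commute[of Y C]
        inner_commute[of M0 Y] CC M0M0 CM0 CY YM0 power2_eq_square algebra_simps)
      (metis distrib_left mult.right_neutral power2_eq_square sin_cos_squared_add2)
  ultimately show ?thesis by (simp add: Mset_iff_inner M0_def r_def)
qed

(* Mset is a sphere inside an affine hyperplane; a great circle through the maximizer in any tangent
   direction X stays in Mset, so the derivative of det along it vanishes. *)
lemma cofactor_matrix_orthogonal_at_maximizer: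
  fixes M X :: "real^'n^'n"
  assumes \<alpha>\<beta>: "\<alpha>^2 < real CARD('n) * \<beta>"
    and M: "M \<in> Mset \<alpha> \<beta>"
    and max: "\<forall>N::real^'n^'n \<in> Mset \<alpha> \<beta>. det N \<le> det M"
    and XJ: "inner X onesJ = 0" and XM: "inner X M = 0"
  shows "inner (cofactor_matrix M) X = 0"
proof (cases "X = 0")
  case False
  define r where "r = real CARD('n) * \<beta> - \<alpha>^2"
  have "r > 0" using \<alpha>\<beta> by (simp add: r_def)
  define Y where "Y = (sqrt r / norm X) *\<^sub>R X"
  have YY: "inner Y Y = r"
    using False \<open>r > 0\<close> by (simp add: Y_def power2_eq_square[symmetric] dot_square_norm)
  define C :: "real^'n^'n" where "C = (\<alpha> / real CARD('n)) *\<^sub>R onesJ"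
  define \<gamma> where "\<gamma> t = C + cos t *\<^sub>R (M - C) + sin t *\<^sub>R Y" for t
  have \<gamma>_in: "\<gamma> t \<in> Mset \<alpha> \<beta>" for t
    unfolding \<gamma>_def C_def using M YY XJ XM by (intro Mset_great_circle) (simp_all add: Y_def r_def)
  have \<gamma>0: "\<gamma> 0 = M" by (simp add: \<gamma>_def)
  have "((\<lambda>t. det (\<gamma> t)) has_real_derivative inner (cofactor_matrix M) Y) (at 0)"
  proof (rule has_real_derivative_det[of \<gamma> Y 0, unfolded \<gamma>0])
    show "((\<lambda>t. \<gamma> t $ i $ j) has_real_derivative Y $ i $ j) (at 0)" for i j
      by (auto simp: \<gamma>_def intro!: derivative_eq_intros)
  qed
  then have "inner (cofactor_matrix M) Y = 0"
    by (rule DERIV_local_max[where d = 1]) (simp_all add: \<gamma>0 max[rule_format, OF \<gamma>_in])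
  then show ?thesis using False \<open>r > 0\<close> by (simp add: Y_def)
qed simp

lemma cofactor_matrix_at_maximizer:
  fixes M :: "real^'n^'n"
  assumes \<alpha>\<beta>: "\<alpha>^2 < real CARD('n) * \<beta>"
    and M: "M \<in> Mset \<alpha> \<beta>"
    and max: "\<forall>N::real^'n^'n \<in> Mset \<alpha> \<beta>. det N \<le> det M"
  obtains a b where "cofactor_matrix M = a *\<^sub>R onesJ + b *\<^sub>R M"
proof -
  define n where "n = real CARD('n)"
  define M0 where "M0 = M - (\<alpha> / n) *\<^sub>R onesJ"
  define r where "r = n * \<beta> - \<alpha>^2"
  have r: "r > 0" using \<alpha>\<beta> by (simp add: r_def n_def)
  have M0J: "inner M0 onesJ = 0" and M0M0: "inner M0 M0 = r"
    using Mset_centered[OF M] by (simp_all add: M0_def r_def n_def)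
  define Cf where "Cf = cofactor_matrix M"
  define a where "a = inner Cf onesJ / n^2"
  define b where "b = inner Cf M0 / r"
  define Z where "Z = Cf - a *\<^sub>R onesJ - b *\<^sub>R M0"
  have ZJ: "inner Z onesJ = 0"
    by (simp add: Z_def inner_diff_left inner_onesJ_onesJ M0J a_def n_def)
  have ZM0: "inner Z M0 = 0"
    using r by (simp add: Z_def inner_diff_left M0M0 inner_commute[of onesJ M0] M0J b_def)
  have "inner Z M = 0"
    using ZJ ZM0 by (simp add: M0_def inner_diff_right)
  then have CfZ: "inner Cf Z = 0"
    unfolding Cf_def by (rule cofactor_matrix_orthogonal_at_maximizer[OF \<alpha>\<beta> M max ZJ])
  have "inner Z Z = inner Cf Z - a * inner onesJ Z - b * inner M0 Z"
    by (simp add: Z_def inner_diff_left)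
  also have "\<dots> = 0"
    by (simp add: CfZ inner_commute[of onesJ Z] ZJ inner_commute[of M0 Z] ZM0)
  finally have "Z = 0" by simp
  then have "Cf = (a - b * \<alpha> / n) *\<^sub>R onesJ + b *\<^sub>R M"
    by (simp add: Z_def M0_def algebra_simps)
  then show thesis unfolding Cf_def by (rule that)
qed

section \<open>Line sums and Gram matrices\<close>

definition row_sum :: "'a::comm_monoid_add^'n^'m \<Rightarrow> 'm \<Rightarrow> 'a" where
  "row_sum A i = (\<Sum>j\<in>UNIV. A $ i $ j)"

lemma sum_row_sum: "(\<Sum>i\<in>UNIV. row_sum N i) = msum N"
  by (simp add: row_sum_def msum_def)

lemma msum_transpose: "msum (transpose N) = msum N"
  unfolding msum_def transpose_def by (simp add: sum.swap[of "\<lambda>i j. N $ j $ i"])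

lemma msq_transpose: "msq (transpose N) = msq N"
  unfolding msq_def transpose_def by (simp add: sum.swap[of "\<lambda>i j. (N $ j $ i)^2"])

lemma trace_gram: "trace (N ** transpose N) = msq N"
  by (simp add: trace_def msq_def matrix_matrix_mult_def transpose_def power2_eq_square)

lemma msum_gram: "msum (N ** transpose N) = (\<Sum>j\<in>UNIV. (row_sum (transpose N) j)^2)"
proof -
  have "(\<Sum>j\<in>UNIV. (row_sum (transpose N) j)^2) = (\<Sum>j\<in>UNIV. \<Sum>i\<in>UNIV. \<Sum>k\<in>UNIV. N$i$j * N$k$j)"
    by (simp add: row_sum_def transpose_def power2_eq_square sum_product)
  also have "\<dots> = (\<Sum>i\<in>UNIV. \<Sum>k\<in>UNIV. \<Sum>j\<in>UNIV. N$i$j * N$k$j)"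
    by (subst sum.swap) (rule sum.cong[OF refl], rule sum.swap)
  finally show ?thesis
    by (simp add: msum_def matrix_matrix_mult_def transpose_def)
qed

lemma trace_scalar_plus_onesJ:
  "trace (p *\<^sub>R mat 1 + q *\<^sub>R (onesJ :: real^'n^'n)) = real CARD('n) * (p + q)"
  by (simp add: trace_def mat_def onesJ_def algebra_simps)

lemma msum_scalar_plus_onesJ:
  "msum (p *\<^sub>R mat 1 + q *\<^sub>R (onesJ :: real^'n^'n)) = real CARD('n) * (p + real CARD('n) * q)"
  by (simp add: msum_def mat_def onesJ_def sum.distrib if_distrib[of "(*) p"] algebra_simps
      cong: if_cong)

lemma sum_power2_deviation:
  fixes f :: "'a \<Rightarrow> real"
  assumes "(\<Sum>j\<in>A. f j) = real (card A) * c"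
  shows "(\<Sum>j\<in>A. (f j - c)^2) = (\<Sum>j\<in>A. (f j)^2) - real (card A) * c^2"
proof -
  have "(\<Sum>j\<in>A. (f j - c)^2) = (\<Sum>j\<in>A. (f j)^2) - 2 * c * (\<Sum>j\<in>A. f j) + real (card A) * c^2"
    by (simp add: power2_diff sum.distrib sum_subtractf sum_distrib_left[symmetric]
        sum_distrib_right[symmetric] mult_ac)
  then show ?thesis
    using assms by (simp add: power2_eq_square)
qed

lemma row_sums_eq_of_const:
  fixes N :: "real^'n^'n"
  assumes "\<And>i k. row_sum N i = row_sum N k" and "msum N = real CARD('n) * \<alpha>"
  shows "row_sum N i = \<alpha>"
proof -
  have "(\<Sum>k\<in>UNIV. row_sum N k) = (\<Sum>k\<in>(UNIV::'n set). row_sum N i)"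
    by (rule sum.cong) (simp, rule assms(1))
  then have "msum N = real CARD('n) * row_sum N i"
    by (simp add: sum_row_sum)
  then show ?thesis
    using assms(2) by simp
qed

lemma matrix_add_rdistrib: "(A + B) ** C = A ** C + B ** C"
  by (simp add: matrix_matrix_mult_def vec_eq_iff sum.distrib distrib_right)

lemma transpose_add: "transpose (A + B) = transpose A + transpose B"
  by (simp add: transpose_def vec_eq_iff)

lemma transpose_onesJ [simp]: "transpose onesJ = onesJ"
  by (simp add: transpose_def onesJ_def)

lemma gram_identities_of_cofactor_matrix:
  fixes M :: "real^'n^'n"
  assumes cof: "cofactor_matrix M = a *\<^sub>R onesJ + b *\<^sub>R M" and D: "det M \<noteq> 0"
  shows "a *\<^sub>R (onesJ ** transpose M) + b *\<^sub>R (M ** transpose M) = mat (det M)"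
    and "a *\<^sub>R (onesJ ** M) + b *\<^sub>R (transpose M ** M) = mat (det M)"
proof -
  have right: "cofactor_matrix M ** transpose M = mat (det M)"
    by (rule cofactor_matrix_mult_transpose)
  then show "a *\<^sub>R (onesJ ** transpose M) + b *\<^sub>R (M ** transpose M) = mat (det M)"
    by (simp add: cof matrix_add_rdistrib scalar_matrix_assoc)
  have "cofactor_matrix M ** ((1 / det M) *\<^sub>R transpose M) = mat 1"
    using D by (simp add: matrix_scalar_ac scalar_matrix_assoc[symmetric] right vec_eq_iff mat_def)
  then have "((1 / det M) *\<^sub>R transpose M) ** cofactor_matrix M = mat 1"
    by (simp add: matrix_left_right_inverse)
  then have "transpose M ** cofactor_matrix M = mat (det M)"
    using D by (simp add: scalar_matrix_assoc[symmetric] vec_eq_iff mat_def field_simps)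
  then have "transpose (cofactor_matrix M) ** M = mat (det M)"
    by (metis matrix_transpose_mul transpose_mat transpose_transpose)
  then show "a *\<^sub>R (onesJ ** M) + b *\<^sub>R (transpose M ** M) = mat (det M)"
    by (simp add: cof transpose_add transpose_scalar matrix_add_rdistrib scalar_matrix_assoc)
qed

lemma gram_identity_entry:
  fixes N :: "real^'n^'n"
  assumes "a *\<^sub>R (onesJ ** transpose N) + b *\<^sub>R (N ** transpose N) = mat D"
  shows "a * row_sum N k + b * (N ** transpose N) $ i $ k = (if i = k then D else 0)"
proof -
  have "(a *\<^sub>R (onesJ ** transpose N) + b *\<^sub>R (N ** transpose N)) $ i $ k
      = a * row_sum N k + b * (N ** transpose N) $ i $ k"
    by (simp add: matrix_matrix_mult_def transpose_def onesJ_def row_sum_def)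
  then show ?thesis using assms by (simp add: mat_def)
qed

lemma gram_symmetric:
  fixes N :: "'a::comm_semiring_1^'n^'m"
  shows "(N ** transpose N) $ i $ k = (N ** transpose N) $ k $ i"
  unfolding matrix_matrix_mult_def transpose_def by (simp add: mult.commute[of "N $ i $ _"])

lemma row_sums_eq_of_gram_identity:
  fixes N :: "real^'n^'n"
  assumes E: "a *\<^sub>R (onesJ ** transpose N) + b *\<^sub>R (N ** transpose N) = mat D" and "a \<noteq> 0"
  shows "row_sum N i = row_sum N k"
proof (cases "i = k")
  case False
  have "a * row_sum N i + b * (N ** transpose N) $ i $ k = 0"
    using gram_identity_entry[OF E, of i k] False by (simp add: gram_symmetric[of N k i])
  moreover have "a * row_sum N k + b * (N ** transpose N) $ i $ k = 0"
    using gram_identity_entry[OF E, of k i] False by simp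
  ultimately have "a * row_sum N i = a * row_sum N k"
    by linarith
  then show ?thesis using \<open>a \<noteq> 0\<close> by simp
qed simp

lemma gram_scalar_of_gram_identity:
  fixes N :: "real^'n^'n"
  assumes E: "b *\<^sub>R (N ** transpose N) = mat D" and "D \<noteq> 0" and "msq N = real CARD('n) * \<beta>"
  shows "N ** transpose N = \<beta> *\<^sub>R mat 1"
proof -
  have "b \<noteq> 0"
  proof
    assume "b = 0"
    then have "(mat D :: real^'n^'n) $ i $ i = 0" for i
      using E by (simp flip: E)
    then show False using \<open>D \<noteq> 0\<close> by (simp add: mat_def)
  qed
  then have G: "N ** transpose N = (D / b) *\<^sub>R mat 1"
    using E by (simp add: vec_eq_iff mat_def field_simps)
  have "real CARD('n) * \<beta> = real CARD('n) * (D / b)"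
    using trace_gram[of N] trace_scalar_plus_onesJ[of "D / b" 0, where 'n='n] \<open>msq N = _\<close> by (simp add: G)
  then have "D / b = \<beta>" by (subst (asm) mult_cancel_left) simp
  then show ?thesis by (simp add: G)
qed

lemma exists_two_distinct:
  assumes "2 \<le> CARD('n)"
  obtains i j :: 'n where "i \<noteq> j"
  using assms card_le_Suc0_iff_eq[of "UNIV :: 'n set"] by fastforce

lemma gram_scalar_plus_onesJ_of_gram_identity:
  fixes N :: "real^'n^'n"
  assumes E: "a *\<^sub>R (onesJ ** transpose N) + b *\<^sub>R (N ** transpose N) = mat D"
    and "D \<noteq> 0" and "2 \<le> CARD('n)" and rows: "\<And>k. row_sum N k = \<alpha>"
  obtains p q where "N ** transpose N = p *\<^sub>R mat 1 + q *\<^sub>R onesJ"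
proof -
  have entry: "a * \<alpha> + b * (N ** transpose N) $ i $ k = (if i = k then D else 0)" for i k
    using gram_identity_entry[OF E] rows by simp
  have "b \<noteq> 0"
  proof
    assume "b = 0"
    obtain i k :: 'n where "i \<noteq> k" using exists_two_distinct \<open>2 \<le> CARD('n)\<close> by blast
    then show False using entry[of i k] entry[of k k] \<open>b = 0\<close> \<open>D \<noteq> 0\<close> by auto
  qed
  then have "N ** transpose N = (D / b) *\<^sub>R mat 1 + (- a * \<alpha> / b) *\<^sub>R onesJ"
    using entry by (simp add: vec_eq_iff mat_def onesJ_def field_simps)
  then show thesis by (rule that)
qed

lemma coefficients_of_gram_scalar_plus_onesJ:
  fixes N :: "real^'n^'n"
  assumes G: "N ** transpose N = p *\<^sub>R mat 1 + q *\<^sub>R onesJ"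
    and "2 \<le> CARD('n)" and "msq N = real CARD('n) * \<beta>"
    and cols: "\<And>j. row_sum (transpose N) j = \<alpha>"
  shows "q = (\<alpha>^2 - \<beta>) / (real CARD('n) - 1)" and "p = \<beta> - q"
proof -
  define n where "n = real CARD('n)"
  have "n > 1" using \<open>2 \<le> CARD('n)\<close> by (simp add: n_def)
  have "n * (p + q) = n * \<beta>"
    using trace_gram[of N] trace_scalar_plus_onesJ[of p q, where 'n='n] \<open>msq N = _\<close>
    by (simp add: G n_def)
  then have trace: "p + q = \<beta>" using \<open>n > 1\<close> by simp
  have "n * (p + n * q) = n * \<alpha>^2"
    using msum_gram[of N] msum_scalar_plus_onesJ[of p q, where 'n='n] by (simp add: G cols n_def)
  then have total: "p + n * q = \<alpha>^2" using \<open>n > 1\<close> by simp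
  show "q = (\<alpha>^2 - \<beta>) / (n - 1)"
    using trace total \<open>n > 1\<close> by (simp add: field_simps)
  then show "p = \<beta> - q"
    using trace by simp
qed

lemma column_sums_of_gram_scalar:
  fixes N :: "real^'n^'n"
  assumes G: "N ** transpose N = \<beta> *\<^sub>R mat 1" and "msum N = real CARD('n) * \<alpha>"
  shows "\<alpha>^2 \<le> \<beta>" and "\<alpha>^2 = \<beta> \<Longrightarrow> row_sum (transpose N) j = \<alpha>"
proof -
  define n where "n = real CARD('n)"
  have "(\<Sum>j\<in>UNIV. row_sum (transpose N) j) = real (card (UNIV :: 'n set)) * \<alpha>"
    using \<open>msum N = _\<close> by (simp add: sum_row_sum msum_transpose)
  then have "(\<Sum>j\<in>UNIV. (row_sum (transpose N) j - \<alpha>)^2)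
      = (\<Sum>j\<in>UNIV. (row_sum (transpose N) j)^2) - n * \<alpha>^2"
    unfolding n_def by (rule sum_power2_deviation)
  also have "(\<Sum>j\<in>UNIV. (row_sum (transpose N) j)^2) = n * \<beta>"
    using msum_gram[of N] msum_scalar_plus_onesJ[of \<beta> 0, where 'n='n] by (simp add: G n_def)
  finally have dev: "(\<Sum>j\<in>UNIV. (row_sum (transpose N) j - \<alpha>)^2) = n * (\<beta> - \<alpha>^2)"
    by (simp add: algebra_simps)
  moreover have "0 \<le> (\<Sum>j\<in>UNIV. (row_sum (transpose N) j - \<alpha>)^2)"
    by (simp add: sum_nonneg)
  ultimately show "\<alpha>^2 \<le> \<beta>"
    by (simp add: n_def zero_le_mult_iff)
  assume "\<alpha>^2 = \<beta>"
  then have "(\<Sum>j\<in>UNIV. (row_sum (transpose N) j - \<alpha>)^2) = 0"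
    using dev by simp
  then show "row_sum (transpose N) j = \<alpha>"
    by (simp add: sum_nonneg_eq_0_iff)
qed

section \<open>Matrices p I + q J and elements of Mset\<close>

lemma det_scaleR: "det (c *\<^sub>R A) = c ^ CARD('n) * det (A :: real^'n^'n)"
  by (simp add: det_def prod.distrib sum_distrib_left mult_ac)

lemma orthogonal_matrix_mapping:
  fixes u v :: "real^'n"
  assumes "2 \<le> CARD('n)" "norm u = 1" "norm v = 1"
  obtains Q where "orthogonal_matrix Q" "det Q = 1" "Q *v u = v"
proof -
  obtain f where f: "orthogonal_transformation f" "det (matrix f) = 1" "f u = v"
    using rotation_exists_1[OF assms] by blast
  then have "orthogonal_matrix (matrix f)" "matrix f *v u = v"
    by (auto simp: orthogonal_transformation_matrix matrix_works)
  with f(2) that show thesis by blast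
qed

lemma onesJ_conjugate:
  fixes A B :: "real^'n^'m"
  shows "(A ** onesJ ** transpose B) $ i $ j = (A *v 1) $ i * (B *v 1) $ j"
  by (simp add: matrix_matrix_mult_def matrix_vector_mult_def transpose_def onesJ_def
      sum_distrib_left sum_distrib_right)

(* Conjugating by a rotation that takes the all-ones direction to a coordinate axis diagonalises
   p I + q J, with eigenvalue p + n q on that axis and p elsewhere. *)
lemma det_scalar_plus_onesJ:
  assumes "2 \<le> CARD('n)"
  shows "det (p *\<^sub>R mat 1 + q *\<^sub>R (onesJ :: real^'n^'n))
    = p ^ (CARD('n) - 1) * (p + real CARD('n) * q)"
proof -
  define n where "n = real CARD('n)"
  have "n > 0" by (simp add: n_def)
  define u :: "real^'n" where "u = (1 / sqrt n) *\<^sub>R 1"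
  have "norm u = 1"
    using \<open>n > 0\<close> by (simp add: u_def norm_eq_sqrt_inner inner_vec_def n_def)
  obtain k :: 'n where True by simp
  obtain Q where Q: "orthogonal_matrix Q" "det Q = 1" "Q *v u = axis k 1"
    using orthogonal_matrix_mapping[OF assms \<open>norm u = 1\<close> norm_axis_1] by blast
  have Q1: "Q *v 1 = sqrt n *\<^sub>R axis k 1"
    using \<open>n > 0\<close> Q(3) by (simp add: u_def matrix_vector_mult_scaleR flip: Q(3))
  define X where "X = p *\<^sub>R mat 1 + q *\<^sub>R (onesJ :: real^'n^'n)"
  have "Q ** X ** transpose Q = p *\<^sub>R (Q ** transpose Q) + q *\<^sub>R (Q ** onesJ ** transpose Q)"
    by (simp add: X_def matrix_add_ldistrib matrix_add_rdistrib matrix_scalar_ac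
        scalar_matrix_assoc matrix_mul_assoc)
  also have "\<dots> = (\<chi> i j. if i = j then (if i = k then p + q * n else p) else 0)"
    using Q(1) \<open>n > 0\<close> by (simp add: orthogonal_matrix_def vec_eq_iff onesJ_conjugate Q1 mat_def axis_def)
  finally have diag: "Q ** X ** transpose Q = (\<chi> i j. if i = j then (if i = k then p + q * n else p) else 0)" .
  have "det X = det (Q ** X ** transpose Q)"
    by (simp add: det_mul Q(2))
  also have "\<dots> = (\<Prod>i\<in>UNIV. if i = k then p + q * n else p)"
    unfolding diag by (subst det_diagonal) auto
  also have "\<dots> = (p + q * n) * (\<Prod>i\<in>UNIV - {k}. p)"
    using prod.remove[of UNIV k "\<lambda>i. if i = k then p + q * n else p"]
    by (simp add: prod.cong[of "UNIV - {k}" _ "\<lambda>i. if i = k then p + q * n else p" "\<lambda>_. p"])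
  also have "\<dots> = (p + q * n) * p ^ (CARD('n) - 1)"
    by (simp add: card_Diff_singleton)
  finally show ?thesis by (simp add: X_def n_def mult_ac)
qed

lemma msum_eq_inner_ones: "msum A = inner 1 (A *v 1)"
  by (simp add: msum_def inner_vec_def matrix_vector_mult_def)

lemma msq_orthogonal_matrix: "orthogonal_matrix Q \<Longrightarrow> msq (Q :: real^'n^'n) = real CARD('n)"
  by (simp flip: trace_gram add: orthogonal_matrix_def trace_I)

lemma msq_scalar_plus_onesJ:
  "msq (p *\<^sub>R mat 1 + q *\<^sub>R (onesJ :: real^'n^'n))
    = real CARD('n) * (p^2 + 2 * p * q + real CARD('n) * q^2)"
  by (simp add: msq_def mat_def onesJ_def power2_eq_square if_distrib[of "\<lambda>x. x * _"]
      sum.distrib algebra_simps if_distrib[of "(*) p"] if_distrib[of "(*) q"] if_distrib[of "(*) 2"]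
      cong: if_cong)

(* Q maps the unit all-ones vector u to c u + sqrt (1 - c^2) w with w orthogonal to u, so the entry
   sum of Q, namely n (u \<bullet> Q u), is n c. *)
lemma Mset_scaled_orthogonal_witness:
  assumes n2: "2 \<le> CARD('n)" and "\<beta> > 0" and "\<alpha>^2 \<le> \<beta>"
  obtains N :: "real^'n^'n" where "N \<in> Mset \<alpha> \<beta>" and "det N = sqrt \<beta> ^ CARD('n)"
proof -
  define n where "n = real CARD('n)"
  have "n > 0" by (simp add: n_def)
  define u :: "real^'n" where "u = (1 / sqrt n) *\<^sub>R 1"
  have uu: "inner u u = 1"
    using \<open>n > 0\<close> by (simp add: u_def inner_vec_def n_def)
  obtain i j :: 'n where "i \<noteq> j" using exists_two_distinct[OF n2] by blast
  define w :: "real^'n" where "w = (1 / sqrt 2) *\<^sub>R (axis i 1 - axis j 1)"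
  have ww: "inner w w = 1"
    using \<open>i \<noteq> j\<close> by (simp add: w_def inner_diff_left inner_diff_right inner_axis_axis)
  have uw: "inner u w = 0"
    by (simp add: u_def w_def inner_diff_right inner_axis)
  define c where "c = \<alpha> / sqrt \<beta>"
  have "c^2 \<le> 1" using assms by (simp add: c_def power_divide)
  define v where "v = c *\<^sub>R u + sqrt (1 - c^2) *\<^sub>R w"
  have "inner v v = 1"
    using \<open>c^2 \<le> 1\<close> by (simp add: v_def inner_add_left inner_add_right uu ww uw
        inner_commute[of w u] power2_eq_square[symmetric])
  then obtain Q where Q: "orthogonal_matrix Q" "det Q = 1" "Q *v u = v"
    using orthogonal_matrix_mapping[OF n2, of u v] uu by (auto simp: norm_eq_sqrt_inner)
  define N where "N = sqrt \<beta> *\<^sub>R Q"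
  have "msum Q = n * inner u (Q *v u)"
    using \<open>n > 0\<close> by (simp add: msum_eq_inner_ones u_def matrix_vector_mult_scaleR)
  also have "inner u (Q *v u) = c"
    by (simp add: Q(3) v_def inner_add_right uu uw)
  finally have "msum N = n * \<alpha>"
    using \<open>\<beta> > 0\<close> by (simp add: N_def msum_def sum_distrib_left[symmetric] c_def)
  moreover have "msq N = n * \<beta>"
    using \<open>\<beta> > 0\<close> msq_orthogonal_matrix[OF Q(1)]
    by (simp add: N_def msq_def power_mult_distrib sum_distrib_left[symmetric] n_def)
  moreover have "det N = sqrt \<beta> ^ CARD('n)"
    by (simp add: N_def det_scaleR Q(2))
  ultimately show thesis
    using that by (simp add: Mset_def n_def)
qed

lemma Mset_scalar_plus_onesJ_witness:
  assumes n2: "2 \<le> CARD('n)" and \<alpha>\<beta>: "\<alpha>^2 < real CARD('n) * \<beta>"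
  obtains p q where "p > 0" and "p *\<^sub>R mat 1 + q *\<^sub>R (onesJ :: real^'n^'n) \<in> Mset \<alpha> \<beta>"
proof -
  define n where "n = real CARD('n)"
  have "n \<ge> 2" using n2 by (simp add: n_def)
  define p where "p = sqrt ((n * \<beta> - \<alpha>^2) / (n - 1))"
  have "p > 0" using \<alpha>\<beta> \<open>n \<ge> 2\<close> by (simp add: p_def n_def)
  have p2: "(n - 1) * p^2 = n * \<beta> - \<alpha>^2"
    using \<alpha>\<beta> \<open>n \<ge> 2\<close> by (simp add: p_def n_def)
  define q where "q = (\<alpha> - p) / n"
  have pq: "p + n * q = \<alpha>" using \<open>n \<ge> 2\<close> by (simp add: q_def)
  have "n * (p^2 + 2 * p * q + n * q^2) = (n - 1) * p^2 + (p + n * q)^2"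
    by (simp add: power2_eq_square algebra_simps)
  then have "p^2 + 2 * p * q + n * q^2 = \<beta>"
    using \<open>n \<ge> 2\<close> by (simp add: p2 pq)
  then have "p *\<^sub>R mat 1 + q *\<^sub>R (onesJ :: real^'n^'n) \<in> Mset \<alpha> \<beta>"
    by (simp add: Mset_def msum_scalar_plus_onesJ msq_scalar_plus_onesJ pq flip: n_def)
  with \<open>p > 0\<close> show thesis by (rule that)
qed

lemma Mset_swap_rows:
  fixes N :: "real^'n^'n"
  assumes "N \<in> Mset \<alpha> \<beta>" and "i \<noteq> j"
  defines "N' \<equiv> \<chi> k. N $ Transposition.transpose i j k"
  shows "N' \<in> Mset \<alpha> \<beta>" and "det N' = - det N"
proof -
  have swap: "Transposition.transpose i j permutes UNIV"
    by (rule permutes_swap_id) auto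
  have reindex: "(\<Sum>k\<in>UNIV. f (Transposition.transpose i j k)) = (\<Sum>k\<in>UNIV. f k)"
    for f :: "'n \<Rightarrow> real"
    using sum.permute[OF swap, of f] by (simp add: comp_def)
  show "N' \<in> Mset \<alpha> \<beta>"
    using assms(1) reindex[of "\<lambda>k. \<Sum>l\<in>UNIV. N $ k $ l"] reindex[of "\<lambda>k. \<Sum>l\<in>UNIV. (N $ k $ l)^2"]
    by (simp add: Mset_def msum_def msq_def N'_def)
  show "det N' = - det N"
    unfolding N'_def using det_permute_rows[OF swap, of N] \<open>i \<noteq> j\<close> by (simp add: sign_swap_id)
qed

lemma Bernoulli_inequality_strict:
  fixes t :: real
  assumes "-1 < t" and "t \<noteq> 0" and "2 \<le> m"
  shows "1 + real m * t < (1 + t) ^ m"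
proof -
  obtain k where m: "m = Suc k" and "1 \<le> k" using \<open>2 \<le> m\<close> by (cases m) auto
  have "1 + real m * t < 1 + real m * t + real k * t^2"
    using \<open>t \<noteq> 0\<close> \<open>1 \<le> k\<close> by simp
  also have "\<dots> = (1 + t) * (1 + real k * t)"
    by (simp add: m power2_eq_square algebra_simps)
  also have "\<dots> \<le> (1 + t) * (1 + t) ^ k"
    using Bernoulli_inequality[of t k] \<open>-1 < t\<close> by (intro mult_left_mono) auto
  finally show ?thesis by (simp add: m)
qed

lemma arith_geom_mean_strict:
  fixes x y :: real
  assumes "0 \<le> x" and "0 < y" and "x \<noteq> y" and "1 \<le> m"
  shows "x * y ^ m < ((x + real m * y) / (real m + 1)) ^ (m + 1)"
proof -
  define t where "t = (x - y) / ((real m + 1) * y)"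
  have "(real m + 1) * y > 0" using assms by simp
  have "0 < y * real m" using assms by simp
  have "-1 < t"
    using assms \<open>(real m + 1) * y > 0\<close> by (simp add: t_def field_simps) (use \<open>0 < y * real m\<close> in linarith)
  moreover have "t \<noteq> 0" using assms \<open>(real m + 1) * y > 0\<close> by (simp add: t_def)
  ultimately have "1 + real (m + 1) * t < (1 + t) ^ (m + 1)"
    using \<open>1 \<le> m\<close> by (intro Bernoulli_inequality_strict) auto
  moreover have "1 + real (m + 1) * t = x / y"
    using \<open>(real m + 1) * y > 0\<close> \<open>0 < y\<close> by (simp add: t_def field_simps)
  ultimately have "y ^ (m + 1) * (x / y) < y ^ (m + 1) * (1 + t) ^ (m + 1)"
    using \<open>0 < y\<close> by (intro mult_strict_left_mono) simp_all
  moreover have "y ^ (m + 1) * (x / y) = x * y ^ m"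
    using \<open>0 < y\<close> by (simp add: field_simps)
  moreover have "(x + real m * y) / (real m + 1) = y * (1 + t)"
    using \<open>(real m + 1) * y > 0\<close> by (simp add: t_def field_simps)
  ultimately show ?thesis by (simp add: power_mult_distrib mult_ac)
qed

lemma det_gram: "det (M ** transpose M) = (det M)^2"
  by (simp add: det_mul power2_eq_square)

lemma det_eq_sqrt_det_gram: "0 < det M \<Longrightarrow> det M = sqrt (det (M ** transpose M))"
  for M :: "real^'n^'n"
  by (simp add: det_gram)

lemma sqrt_power_eq_powr: "0 < x \<Longrightarrow> sqrt (x ^ k) = x powr (real k / 2)"
  by (simp add: real_sqrt_power powr_half_sqrt[symmetric] powr_realpow[symmetric] powr_powr)

lemma det_equicorrelated:
  fixes \<alpha> \<beta> :: real
  assumes n2: "2 \<le> CARD('n)"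
  defines "\<delta> \<equiv> (\<alpha>^2 - \<beta>) / (real CARD('n) - 1)"
  shows "det ((\<beta> - \<delta>) *\<^sub>R mat 1 + \<delta> *\<^sub>R (onesJ :: real^'n^'n)) = \<alpha>^2 * (\<beta> - \<delta>) ^ (CARD('n) - 1)"
proof -
  have "(real CARD('n) - 1) * \<delta> = \<alpha>^2 - \<beta>"
    using n2 by (simp add: \<delta>_def)
  then have "\<beta> - \<delta> + real CARD('n) * \<delta> = \<alpha>^2"
    by (simp add: algebra_simps)
  then show ?thesis by (simp add: det_scalar_plus_onesJ[OF n2] mult.commute)
qed

(* Strict AM-GM for the eigenvalues: \<alpha>^2 once and \<beta> - \<delta> with multiplicity n - 1, whose mean is \<beta>. *)
lemma det_equicorrelated_less:
  fixes \<alpha> \<beta> :: real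
  assumes n2: "2 \<le> CARD('n)" and "\<beta> > 0" and "\<alpha>^2 < \<beta>"
  defines "\<delta> \<equiv> (\<alpha>^2 - \<beta>) / (real CARD('n) - 1)"
  shows "det ((\<beta> - \<delta>) *\<^sub>R mat 1 + \<delta> *\<^sub>R (onesJ :: real^'n^'n)) < \<beta> ^ CARD('n)"
proof -
  define m where "m = CARD('n) - 1"
  have m: "CARD('n) = m + 1" "1 \<le> m" using n2 by (simp_all add: m_def)
  then have "real m > 0" by simp
  have "\<beta> < \<beta> - \<delta>"
    using assms n2 by (simp add: \<delta>_def divide_neg_pos)
  have "\<alpha>^2 * (\<beta> - \<delta>) ^ m < ((\<alpha>^2 + real m * (\<beta> - \<delta>)) / (real m + 1)) ^ (m + 1)"
    using \<open>\<beta> < \<beta> - \<delta>\<close> \<open>\<beta> > 0\<close> \<open>\<alpha>^2 < \<beta>\<close> m by (intro arith_geom_mean_strict) simp_all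
  also have "(\<alpha>^2 + real m * (\<beta> - \<delta>)) / (real m + 1) = \<beta>"
  proof -
    have "real m * \<delta> = \<alpha>^2 - \<beta>"
      using \<open>real m > 0\<close> by (simp add: \<delta>_def m)
    then have "\<alpha>^2 + real m * (\<beta> - \<delta>) = \<beta> * (real m + 1)"
      by (simp add: algebra_simps)
    then show ?thesis by simp
  qed
  finally show ?thesis
    using det_equicorrelated[OF n2, where \<alpha>=\<alpha> and \<beta>=\<beta>] by (simp add: \<delta>_def m)
qed

section \<open>The structure of a maximizer\<close>

lemma det_pos_at_maximizer:
  fixes M :: "real^'n^'n"
  assumes n2: "2 \<le> CARD('n)" and "\<beta> > 0" and \<alpha>\<beta>: "\<alpha>^2 < real CARD('n) * \<beta>"
    and max: "\<forall>N::real^'n^'n \<in> Mset \<alpha> \<beta>. det N \<le> det M"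
  shows "det M > 0"
proof (cases "\<alpha>^2 \<le> \<beta>")
  case True
  then obtain N :: "real^'n^'n" where "N \<in> Mset \<alpha> \<beta>" "det N = sqrt \<beta> ^ CARD('n)"
    using Mset_scaled_orthogonal_witness[OF n2 \<open>\<beta> > 0\<close>] by blast
  with max \<open>\<beta> > 0\<close> show ?thesis
    by (metis real_sqrt_gt_0_iff zero_less_power order_less_le_trans)
next
  case False
  then have "\<alpha> \<noteq> 0" using \<open>\<beta> > 0\<close> by auto
  obtain p q where "p > 0" and N: "p *\<^sub>R mat 1 + q *\<^sub>R (onesJ :: real^'n^'n) \<in> Mset \<alpha> \<beta>"
    using Mset_scalar_plus_onesJ_witness[OF n2 \<alpha>\<beta>] by blast
  have "det (p *\<^sub>R mat 1 + q *\<^sub>R (onesJ :: real^'n^'n)) = p ^ (CARD('n) - 1) * \<alpha>"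
    using N by (simp add: det_scalar_plus_onesJ[OF n2] Mset_def msum_scalar_plus_onesJ)
  then have "det (p *\<^sub>R mat 1 + q *\<^sub>R (onesJ :: real^'n^'n)) \<noteq> 0"
    using \<open>p > 0\<close> \<open>\<alpha> \<noteq> 0\<close> by simp
  moreover obtain i j :: 'n where "i \<noteq> j"
    using exists_two_distinct[OF n2] by blast
  ultimately obtain N' :: "real^'n^'n" where "N' \<in> Mset \<alpha> \<beta>" "det N' > 0"
    using N Mset_swap_rows[OF N \<open>i \<noteq> j\<close>] by (metis neg_0_less_iff_less linorder_neqE_linordered_idom)
  with max show ?thesis by force
qed

lemma gram_at_maximizer:
  fixes M :: "real^'n^'n"
  assumes n2: "2 \<le> CARD('n)" and "\<beta> > 0" and \<alpha>\<beta>: "\<alpha>^2 < real CARD('n) * \<beta>"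
    and M: "M \<in> Mset \<alpha> \<beta>" and max: "\<forall>N::real^'n^'n \<in> Mset \<alpha> \<beta>. det N \<le> det M"
  defines "\<delta> \<equiv> (\<alpha>^2 - \<beta>) / (real CARD('n) - 1)"
  shows "M ** transpose M = \<beta> *\<^sub>R mat 1 \<and> transpose M ** M = \<beta> *\<^sub>R mat 1
    \<or> (\<forall>i. row_sum M i = \<alpha>) \<and> (\<forall>j. row_sum (transpose M) j = \<alpha>)
      \<and> M ** transpose M = (\<beta> - \<delta>) *\<^sub>R mat 1 + \<delta> *\<^sub>R onesJ"
proof -
  have "det M \<noteq> 0" using det_pos_at_maximizer[OF n2 \<open>\<beta> > 0\<close> \<alpha>\<beta> max] by simp
  obtain a b where cof: "cofactor_matrix M = a *\<^sub>R onesJ + b *\<^sub>R M"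
    using cofactor_matrix_at_maximizer[OF \<alpha>\<beta> M max] by blast
  have E: "a *\<^sub>R (onesJ ** transpose N) + b *\<^sub>R (N ** transpose N) = mat (det M)"
    if "N = M \<or> N = transpose M" for N
    using gram_identities_of_cofactor_matrix[OF cof \<open>det M \<noteq> 0\<close>] that by auto
  have sums: "msum N = real CARD('n) * \<alpha>" "msq N = real CARD('n) * \<beta>"
    if "N = M \<or> N = transpose M" for N
    using M that by (auto simp: Mset_def msum_transpose msq_transpose)
  show ?thesis
  proof (cases "a = 0")
    case True
    then have "N ** transpose N = \<beta> *\<^sub>R mat 1" if "N = M \<or> N = transpose M" for N
      using E[OF that] sums[OF that] \<open>det M \<noteq> 0\<close> by (simp add: gram_scalar_of_gram_identity)
    from this[of M] this[of "transpose M"] show ?thesis by simp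
  next
    case False
    then have rows: "row_sum N i = \<alpha>" if "N = M \<or> N = transpose M" for N i
      using row_sums_eq_of_gram_identity[OF E[OF that]] sums[OF that]
      by (blast intro: row_sums_eq_of_const)
    obtain p q where G: "M ** transpose M = p *\<^sub>R mat 1 + q *\<^sub>R onesJ"
      using gram_scalar_plus_onesJ_of_gram_identity[OF E \<open>det M \<noteq> 0\<close> n2 rows] by blast
    have "q = \<delta>" "p = \<beta> - \<delta>"
      using coefficients_of_gram_scalar_plus_onesJ[OF G n2 sums(2) rows] by (simp_all add: \<delta>_def)
    then show ?thesis using G rows by simp
  qed
qed

lemma maximizer_small_alpha:
  fixes M :: "real^'n^'n"
  assumes n2: "2 \<le> CARD('n)" and "\<beta> > 0" and \<alpha>\<beta>: "\<alpha>^2 < real CARD('n) * \<beta>"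
    and M: "M \<in> Mset \<alpha> \<beta>" and max: "\<forall>N::real^'n^'n \<in> Mset \<alpha> \<beta>. det N \<le> det M"
    and small: "\<alpha>^2 \<le> \<beta>"
  shows "M ** transpose M = \<beta> *\<^sub>R mat 1" and "det M = \<beta> powr (real CARD('n) / 2)"
proof -
  define \<delta> where "\<delta> = (\<alpha>^2 - \<beta>) / (real CARD('n) - 1)"
  have "0 < det M"
    by (rule det_pos_at_maximizer) fact+
  obtain N :: "real^'n^'n" where "N \<in> Mset \<alpha> \<beta>" "det N = sqrt \<beta> ^ CARD('n)"
    using Mset_scaled_orthogonal_witness[OF n2 \<open>\<beta> > 0\<close> small] by blast
  then have "(sqrt \<beta> ^ CARD('n))^2 \<le> (det M)^2"
    using max \<open>\<beta> > 0\<close> by (intro power_mono) auto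
  then have witness: "\<beta> ^ CARD('n) \<le> det (M ** transpose M)"
    using \<open>\<beta> > 0\<close> by (simp add: det_gram power2_eq_square power_mult_distrib[symmetric])
  consider "M ** transpose M = \<beta> *\<^sub>R mat 1"
    | "M ** transpose M = (\<beta> - \<delta>) *\<^sub>R mat 1 + \<delta> *\<^sub>R onesJ"
    using gram_at_maximizer[OF n2 \<open>\<beta> > 0\<close> \<alpha>\<beta> M max] unfolding \<delta>_def by blast
  then show G: "M ** transpose M = \<beta> *\<^sub>R mat 1"
  proof cases
    case 2
    then have "\<alpha>^2 = \<beta>"
      using witness det_equicorrelated_less[OF n2 \<open>\<beta> > 0\<close>, where \<alpha>=\<alpha>] small
      by (force simp: \<delta>_def)
    with 2 show ?thesis by (simp add: \<delta>_def)
  qed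
  show "det M = \<beta> powr (real CARD('n) / 2)"
    using \<open>0 < det M\<close> \<open>\<beta> > 0\<close> by (simp add: det_eq_sqrt_det_gram G det_scaleR sqrt_power_eq_powr)
qed

lemma maximizer_large_alpha:
  fixes M :: "real^'n^'n"
  assumes n2: "2 \<le> CARD('n)" and "\<beta> > 0" and \<alpha>\<beta>: "\<alpha>^2 < real CARD('n) * \<beta>"
    and M: "M \<in> Mset \<alpha> \<beta>" and max: "\<forall>N::real^'n^'n \<in> Mset \<alpha> \<beta>. det N \<le> det M"
    and large: "\<beta> \<le> \<alpha>^2"
  defines "\<delta> \<equiv> (\<alpha>^2 - \<beta>) / (real CARD('n) - 1)"
  shows "\<forall>i. row_sum M i = \<alpha>" and "\<forall>j. row_sum (transpose M) j = \<alpha>"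
    and "M ** transpose M = (\<beta> - \<delta>) *\<^sub>R mat 1 + \<delta> *\<^sub>R onesJ"
    and "det M = \<bar>\<alpha>\<bar> * (\<beta> - \<delta>) powr ((real CARD('n) - 1) / 2)"
proof -
  have sums: "msum M = real CARD('n) * \<alpha>" "msum (transpose M) = real CARD('n) * \<alpha>"
    using M by (simp_all add: Mset_def msum_transpose)
  have "(\<forall>i. row_sum M i = \<alpha>) \<and> (\<forall>j. row_sum (transpose M) j = \<alpha>)
      \<and> M ** transpose M = (\<beta> - \<delta>) *\<^sub>R mat 1 + \<delta> *\<^sub>R onesJ"
  proof (cases "M ** transpose M = \<beta> *\<^sub>R mat 1 \<and> transpose M ** M = \<beta> *\<^sub>R mat 1")
    case True
    then have "\<alpha>^2 = \<beta>"
      using column_sums_of_gram_scalar(1)[OF _ sums(1)] large by force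
    then show ?thesis
      using column_sums_of_gram_scalar(2)[OF _ sums(1)]
        column_sums_of_gram_scalar(2)[of "transpose M", OF _ sums(2)] True by (simp add: \<delta>_def)
  next
    case False
    then show ?thesis
      using gram_at_maximizer[OF n2 \<open>\<beta> > 0\<close> \<alpha>\<beta> M max] unfolding \<delta>_def by blast
  qed
  then show "\<forall>i. row_sum M i = \<alpha>" "\<forall>j. row_sum (transpose M) j = \<alpha>"
    and G: "M ** transpose M = (\<beta> - \<delta>) *\<^sub>R mat 1 + \<delta> *\<^sub>R onesJ"
    by simp_all
  have "\<beta> - \<delta> > 0"
    using \<alpha>\<beta> n2 by (simp add: \<delta>_def field_simps)
  have "det M = sqrt (det (M ** transpose M))"
    using det_pos_at_maximizer[OF n2 \<open>\<beta> > 0\<close> \<alpha>\<beta> max] by (rule det_eq_sqrt_det_gram)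
  also have "\<dots> = sqrt ((\<beta> - \<delta>) ^ (CARD('n) - 1)) * \<bar>\<alpha>\<bar>"
    using det_equicorrelated[OF n2, where \<alpha>=\<alpha> and \<beta>=\<beta>]
    by (simp add: G \<delta>_def real_sqrt_mult mult.commute)
  also have "\<dots> = \<bar>\<alpha>\<bar> * (\<beta> - \<delta>) powr ((real CARD('n) - 1) / 2)"
    using \<open>\<beta> - \<delta> > 0\<close> n2 by (simp add: sqrt_power_eq_powr of_nat_diff)
  finally show "det M = \<bar>\<alpha>\<bar> * (\<beta> - \<delta>) powr ((real CARD('n) - 1) / 2)" .
qed

theorem mainTheorem4:
  fixes M :: "real^'n^'n" and \<alpha> \<beta> :: real
  assumes n2: "CARD('n) \<ge> 2"
    and \<beta>pos: "\<beta> > 0"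
    and \<alpha>\<beta>: "\<alpha>^2 < real CARD('n) * \<beta>"
    and Min: "M \<in> Mset \<alpha> \<beta>"
    and Mmax: "\<forall>N::real^'n^'n \<in> Mset \<alpha> \<beta>. det N \<le> det M"
  shows "(\<alpha>^2 \<le> \<beta> \<longrightarrow>
            M ** transpose M = \<beta> *\<^sub>R mat 1
          \<and> det M = \<beta> powr (real CARD('n) / 2))
       \<and> (\<alpha>^2 \<ge> \<beta> \<longrightarrow>
          (let \<delta> = (\<alpha>^2 - \<beta>) / (real CARD('n) - 1) in
            (\<forall>i. (\<Sum>j\<in>UNIV. M $ i $ j) = \<alpha>)
          \<and> (\<forall>j. (\<Sum>i\<in>UNIV. M $ i $ j) = \<alpha>)
          \<and> M ** transpose M = (\<beta> - \<delta>) *\<^sub>R mat 1 + \<delta> *\<^sub>R onesJ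
          \<and> det M = \<bar>\<alpha>\<bar> * (\<beta> - \<delta>) powr ((real CARD('n) - 1) / 2)))"
  using maximizer_small_alpha[OF n2 \<beta>pos \<alpha>\<beta> Min Mmax]
    maximizer_large_alpha[OF n2 \<beta>pos \<alpha>\<beta> Min Mmax]
  by (simp add: Let_def row_sum_def transpose_def)

end
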